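(* Let $n$ be a positive even integer and let $\lambda_n$ be the Lebesgue function of polynomial interpolation in $\mathbb{P}^2_n$ at the Morrow-Patterson points $MP_n$. Then $\lambda_n(x,y)=\lambda_n(-x,y)$ for all $(x,y)\in Q=[-1,1]^2$.
   Context: $\mathbb{P}^2_n$ is the space of real bivariate polynomials of total degree at most $n$. The Morrow-Patterson points are $MP_n=\{(x_m,y_{m,k}) : m=1,\dots,n+1,\ k=1,\dots,\tfrac n2+1\}$ with $x_m=\cos\frac{m\pi}{n+2}$ and $y_{m,k}=\cos\frac{2k\pi}{n+3}$ if $m$ is odd, $y_{m,k}=\cos\frac{(2k-1)\pi}{n+3}$ if $m$ is even; this set is unisolvent for $\mathbb{P}^2_n$. The Lebesgue function is $\lambda_n(x,y)=\sum_{a\in MP_n}|\ell_a(x,y)|$, where $\ell_a\in\mathbb{P}^2_n$ are the Lagrange basis polynomials with $\ell_a(b)=\delta_{ab}$ for $a,b\in MP_n$. *)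

theory Defs
  imports Complex_Main
begin

definition P2 :: "nat \<Rightarrow> (real \<times> real \<Rightarrow> real) set" where
  "P2 n = {f. \<exists>c :: nat \<Rightarrow> nat \<Rightarrow> real.
             \<forall>x y. f (x, y) = (\<Sum>i\<le>n. \<Sum>j\<le>n - i. c i j * x ^ i * y ^ j)}"

definition MP :: "nat \<Rightarrow> (real \<times> real) set" where
  "MP n = {(cos (real m * pi / real (n + 2)),
            if odd m then cos (2 * real k * pi / real (n + 3))
            else cos ((2 * real k - 1) * pi / real (n + 3))) | m k.
           1 \<le> m \<and> m \<le> n + 1 \<and> 1 \<le> k \<and> k \<le> n div 2 + 1}"

text \<open>Lagrange basis polynomial for the node a (well defined by unisolvence).\<close>
definition lagrange_basis :: "nat \<Rightarrow> real \<times> real \<Rightarrow> (real \<times> real \<Rightarrow> real)" where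
  "lagrange_basis n a = (THE p. p \<in> P2 n \<and> (\<forall>b\<in>MP n. p b = (if b = a then 1 else 0)))"

definition lebesgue_fun :: "nat \<Rightarrow> real \<Rightarrow> real \<Rightarrow> real" where
  "lebesgue_fun n x y = (\<Sum>a\<in>MP n. \<bar>lagrange_basis n a (x, y)\<bar>)"

end

theory Submission
  imports Defs "HOL-Computational_Algebra.Polynomial" "Jordan_Normal_Form.Determinant"
begin

text \<open>
  The reflection \<open>reflect (x, y) = (-x, y)\<close> maps \<open>MP n\<close> onto itself (the index change
  \<open>m \<mapsto> n + 2 - m\<close> preserves the parity of \<open>m\<close> because \<open>n\<close> is even) and \<open>P2 n\<close> onto
  itself, so by uniqueness of interpolation the Lagrange basis polynomial of the reflected
  node is the reflected Lagrange basis polynomial; summing absolute values over the nodes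
  gives the symmetry of the Lebesgue function.

  The substance is unisolvence, without which the definite description in \<open>lagrange_basis\<close>
  says nothing. Write \<open>T\<^bsub>k\<^esub> = chebyshev k\<close>. If \<open>p \<in> P2 n\<close> vanishes on \<open>MP n\<close>, then
  \<open>q(t) = p(T\<^bsub>n+3\<^esub>(t), -T\<^bsub>n+2\<^esub>(t))\<close> has degree at most \<open>n(n + 3)\<close> but vanishes at
  \<open>cos (s\<pi> / ((n + 2)(n + 3)))\<close> for the at least \<open>(n + 1)(n + 2)\<close> values
  \<open>0 < s < (n + 2)(n + 3)\<close> divisible by neither \<open>n + 2\<close> nor \<open>n + 3\<close>, because these are mapped
  onto nodes. Hence \<open>q = 0\<close>, and since the products \<open>T\<^bsub>n+3\<^esub>\<^sup>i T\<^bsub>n+2\<^esub>\<^sup>j\<close> with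
  \<open>i + j \<le> n\<close> have the pairwise distinct degrees \<open>(n + 3)i + (n + 2)j\<close>, all coefficients
  of \<open>p\<close> vanish. Interpolants exist because \<open>MP n\<close> has exactly \<open>dim P2 n\<close> elements.
\<close>

section \<open>Chebyshev polynomials and cosines\<close>

fun chebyshev :: "nat \<Rightarrow> real poly" where
  "chebyshev 0 = 1"
| "chebyshev (Suc 0) = [:0, 1:]"
| "chebyshev (Suc (Suc k)) = [:0, 2:] * chebyshev (Suc k) - chebyshev k"

lemma poly_chebyshev_cos: "poly (chebyshev k) (cos t) = cos (real k * t)"
proof (induction k rule: chebyshev.induct)
  case (3 k)
  have "cos (real (Suc (Suc k)) * t) = 2 * cos t * cos (real (Suc k) * t) - cos (real k * t)"
    using cos_times_cos[of t "real (Suc k) * t"] by (simp add: algebra_simps)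
  then show ?case using 3 by simp
qed auto

lemma degree_chebyshev [simp]: "degree (chebyshev k) = k"
proof (induction k rule: chebyshev.induct)
  case (3 k)
  then have "chebyshev (Suc k) \<noteq> 0" by (metis degree_0 nat.distinct(1))
  then have "degree ([:0, 2:] * chebyshev (Suc k)) = Suc (Suc k)"
    using 3 by (simp add: degree_mult_eq)
  then show ?case using 3 degree_add_eq_left[of "- chebyshev k"] by simp
qed auto

lemma chebyshev_nonzero [simp]: "chebyshev k \<noteq> 0"
  by (metis degree_0 degree_chebyshev chebyshev.simps(1) one_neq_zero)

(* Otherwise simp unfolds chebyshev (n + 2), since n + 2 matches Suc (Suc k). *)
declare chebyshev.simps(3) [simp del]

lemma cos_frac_pi_eq_iff:
  fixes u v w :: real
  assumes "0 \<le> u" "u \<le> w" "0 \<le> v" "v \<le> w"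
  shows "cos (u * pi / w) = cos (v * pi / w) \<longleftrightarrow> u = v"
proof (cases "w = 0")
  case False
  then have "0 \<le> u * pi / w \<and> u * pi / w \<le> pi" "0 \<le> v * pi / w \<and> v * pi / w \<le> pi"
    using assms by (auto simp: field_simps)
  moreover have "u * pi / w = v * pi / w \<longleftrightarrow> u = v"
    using False by (auto simp: field_simps)
  ultimately show ?thesis using cos_inj_pi[of "u * pi / w" "v * pi / w"] by auto
qed (use assms in auto)

lemma cos_nat_mult_pi_div_reduce:
  fixes s N :: nat
  assumes "0 < N" "\<not> N dvd s"
  obtains m where "0 < m" "m < N" "even m \<longleftrightarrow> even s"
    "cos (real s * pi / N) = cos (real m * pi / N)"
proof -
  define r where "r = s mod (2 * N)"
  have s: "s = 2 * (s div (2 * N)) * N + r"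
    using div_mult_mod_eq[of s "2 * N"] by (simp add: r_def algebra_simps)
  have "real s * pi / N = real r * pi / N + real (2 * (s div (2 * N))) * pi"
    using assms(1) by (subst s) (simp add: field_simps)
  then have cos_s: "cos (real s * pi / N) = cos (real r * pi / N)"
    by (simp add: cos_add)
  have "r \<notin> {0, N}"
  proof
    assume "r \<in> {0, N}"
    then have "N dvd s" by (subst s) auto
    with assms(2) show False ..
  qed
  moreover have "r < 2 * N" using assms(1) by (simp add: r_def)
  moreover have "even r \<longleftrightarrow> even s" by (subst s) simp
  ultimately have r: "r < 2 * N" "r \<noteq> 0" "r \<noteq> N" "even r \<longleftrightarrow> even s"
    by auto
  show thesis
  proof (cases "r < N")
    case True
    then show thesis using that[of r] r cos_s by auto
  next
    case False
    have "real r * pi / N = 2 * pi - real (2 * N - r) * pi / N"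
      using assms(1) r(1) by (simp add: of_nat_diff field_simps)
    then have "cos (real r * pi / N) = cos (real (2 * N - r) * pi / N)"
      by (simp add: cos_diff)
    then show thesis using that[of "2 * N - r"] False r cos_s by auto
  qed
qed

section \<open>Linear algebra\<close>

lemma lin_indep_distinct_degrees:
  fixes P :: "'k \<Rightarrow> 'a::idom poly"
  assumes "finite K" "\<And>k. k \<in> K \<Longrightarrow> P k \<noteq> 0" "inj_on (\<lambda>k. degree (P k)) K"
    and "(\<Sum>k\<in>K. smult (c k) (P k)) = 0"
  shows "\<forall>k\<in>K. c k = 0"
proof (rule ccontr)
  define K' where "K' = {k \<in> K. c k \<noteq> 0}"
  assume "\<not> (\<forall>k\<in>K. c k = 0)"
  then have "K' \<noteq> {}" "finite K'" using assms(1) by (auto simp: K'_def)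
  define d where "d = Max ((\<lambda>k. degree (P k)) ` K')"
  have "d \<in> (\<lambda>k. degree (P k)) ` K'"
    unfolding d_def using \<open>K' \<noteq> {}\<close> \<open>finite K'\<close> by (intro Max_in) auto
  then obtain k0 where k0: "k0 \<in> K'" "degree (P k0) = d" by blast
  have max: "degree (P k) \<le> d" if "k \<in> K'" for k
    using Max_ge \<open>finite K'\<close> that unfolding d_def by auto
  have "c k * coeff (P k) d = 0" if "k \<in> K - {k0}" for k
  proof (cases "c k = 0")
    case False
    then have "degree (P k) \<noteq> degree (P k0)"
      using that k0(1) assms(3) by (auto simp: K'_def inj_on_def)
    then have "degree (P k) < d"
      using max[of k] k0(2) that False by (auto simp: K'_def)
    then show ?thesis by (simp add: coeff_eq_0)
  qed simp
  then have "(\<Sum>k\<in>K - {k0}. c k * coeff (P k) d) = 0"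
    by (intro sum.neutral) blast
  then have "coeff (\<Sum>k\<in>K. smult (c k) (P k)) d = c k0 * lead_coeff (P k0)"
    using k0 assms(1) by (simp add: coeff_sum sum.remove[of K k0] K'_def)
  then show False using k0 assms(2,4) leading_coeff_0_iff[of "P k0"] by (simp add: K'_def)
qed

lemma injective_square_matrix_surjective:
  fixes A :: "'a::field mat"
  assumes A: "A \<in> carrier_mat N N"
    and inj: "\<And>v. v \<in> carrier_vec N \<Longrightarrow> A *\<^sub>v v = 0\<^sub>v N \<Longrightarrow> v = 0\<^sub>v N"
    and b: "b \<in> carrier_vec N"
  obtains v where "v \<in> carrier_vec N" "A *\<^sub>v v = b"
proof -
  have "det A \<noteq> 0" using inj det_0_iff_vec_prod_zero_field[OF A] by blast
  from det_non_zero_imp_unit[OF A this, of "()"]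
  obtain B where B: "B \<in> carrier_mat N N" "A * B = 1\<^sub>m N"
    unfolding Units_def ring_mat_def by auto
  show thesis
  proof
    show "B *\<^sub>v b \<in> carrier_vec N" using B b by simp
    show "A *\<^sub>v (B *\<^sub>v b) = b" using assoc_mult_mat_vec[OF A B(1) b] B(2) b by simp
  qed
qed

lemma square_linear_system_solvable:
  fixes \<phi> :: "'e \<Rightarrow> 'x \<Rightarrow> 'a::field"
  assumes fin: "finite E" "finite X" and card: "card E = card X"
    and inj: "\<And>c. \<forall>x\<in>X. (\<Sum>e\<in>E. c e * \<phi> e x) = 0 \<Longrightarrow> \<forall>e\<in>E. c e = 0"
  obtains c where "\<forall>x\<in>X. (\<Sum>e\<in>E. c e * \<phi> e x) = g x"
proof -
  define N where "N = card X"
  obtain hX where hX: "bij_betw hX {0..<N} X"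
    using ex_bij_betw_nat_finite[OF fin(2)] unfolding N_def by blast
  obtain hE where hE: "bij_betw hE {0..<N} E"
    using ex_bij_betw_nat_finite[OF fin(1)] unfolding N_def card by blast
  define A where "A = mat N N (\<lambda>(r, k). \<phi> (hE k) (hX r))"
  define coeffs where "coeffs v e = v $ inv_into {0..<N} hE e" for v :: "'a vec" and e
  have coeffs_hE: "coeffs v (hE k) = v $ k" if "k < N" for v k
    using bij_betw_inv_into_left[OF hE] that by (simp add: coeffs_def)
  have eval: "(\<Sum>e\<in>E. coeffs v e * \<phi> e (hX r)) = (A *\<^sub>v v) $ r"
    if "v \<in> carrier_vec N" "r < N" for v r
  proof -
    have "(\<Sum>e\<in>E. coeffs v e * \<phi> e (hX r)) = (\<Sum>k\<in>{0..<N}. coeffs v (hE k) * \<phi> (hE k) (hX r))"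
      by (rule sum.reindex_bij_betw[OF hE, symmetric])
    also have "\<dots> = (A *\<^sub>v v) $ r"
      using that by (auto simp: A_def scalar_prod_def coeffs_hE mult.commute intro!: sum.cong)
    finally show ?thesis .
  qed
  have "v = 0\<^sub>v N" if v: "v \<in> carrier_vec N" and Av: "A *\<^sub>v v = 0\<^sub>v N" for v
  proof -
    have "\<forall>x\<in>X. (\<Sum>e\<in>E. coeffs v e * \<phi> e x) = 0"
      using hX eval[OF v] Av by (auto simp: bij_betw_def)
    then have "coeffs v (hE k) = 0" if "k < N" for k
      using inj hE that by (auto simp: bij_betw_def)
    then show ?thesis using v by (auto simp: coeffs_hE)
  qed
  then obtain v where v: "v \<in> carrier_vec N" "A *\<^sub>v v = vec N (\<lambda>r. g (hX r))"
    using injective_square_matrix_surjective[of A N "vec N (\<lambda>r. g (hX r))"]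
    by (auto simp: A_def)
  have "\<forall>x\<in>X. (\<Sum>e\<in>E. coeffs v e * \<phi> e x) = g x"
    using hX eval[OF v(1)] v(2) by (auto simp: bij_betw_def)
  then show thesis by (rule that)
qed

section \<open>Bivariate polynomials and the reflection\<close>

definition monomial_exponents :: "nat \<Rightarrow> (nat \<times> nat) set" where
  "monomial_exponents n = Sigma {..n} (\<lambda>i. {..n - i})"

definition bimonomial :: "nat \<times> nat \<Rightarrow> real \<times> real \<Rightarrow> real" where
  "bimonomial e z = fst z ^ fst e * snd z ^ snd e"

lemma finite_monomial_exponents [simp]: "finite (monomial_exponents n)"
  by (simp add: monomial_exponents_def)

lemma card_monomial_exponents: "2 * card (monomial_exponents n) = (n + 1) * (n + 2)"
proof -
  have "2 * (\<Sum>i\<le>m. Suc (m - i)) = (m + 1) * (m + 2)" for m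
  proof (induction m)
    case (Suc m)
    have "(\<Sum>i\<le>Suc m. Suc (Suc m - i)) = Suc (Suc m) + (\<Sum>i\<le>m. Suc (m - i))"
      by (subst sum.atMost_Suc_shift) simp
    then show ?case using Suc by (simp add: algebra_simps)
  qed simp
  then show ?thesis by (simp add: monomial_exponents_def)
qed

lemma P2_iff:
  "p \<in> P2 n \<longleftrightarrow> (\<exists>c. \<forall>z. p z = (\<Sum>e\<in>monomial_exponents n. c e * bimonomial e z))"
proof -
  have Sigma_sum: "(\<Sum>i\<le>n. \<Sum>j\<le>n - i. c i j * x ^ i * y ^ j)
      = (\<Sum>e\<in>monomial_exponents n. case_prod c e * bimonomial e (x, y))" for c x y
    unfolding monomial_exponents_def bimonomial_def
    by (subst sum.Sigma) (auto simp: split_def mult.assoc)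
  show ?thesis
  proof
    assume "p \<in> P2 n"
    then obtain c where "\<forall>x y. p (x, y) = (\<Sum>i\<le>n. \<Sum>j\<le>n - i. c i j * x ^ i * y ^ j)"
      by (auto simp: P2_def)
    then show "\<exists>c. \<forall>z. p z = (\<Sum>e\<in>monomial_exponents n. c e * bimonomial e z)"
      by (intro exI[of _ "case_prod c"]) (simp add: Sigma_sum split_paired_All)
  next
    assume "\<exists>c. \<forall>z. p z = (\<Sum>e\<in>monomial_exponents n. c e * bimonomial e z)"
    then obtain c where "\<forall>z. p z = (\<Sum>e\<in>monomial_exponents n. c e * bimonomial e z)" ..
    then show "p \<in> P2 n"
      unfolding P2_def by (auto intro!: exI[of _ "curry c"] simp: Sigma_sum)
  qed
qed

definition reflect :: "real \<times> real \<Rightarrow> real \<times> real" where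
  "reflect z = (- fst z, snd z)"

lemma reflect_Pair [simp]: "reflect (x, y) = (- x, y)"
  by (simp add: reflect_def)

lemma reflect_reflect [simp]: "reflect (reflect z) = z"
  by (simp add: reflect_def)

lemma inj_on_reflect: "inj_on reflect A"
  by (metis inj_on_inverseI reflect_reflect)

lemma reflect_eq_iff: "reflect z = w \<longleftrightarrow> z = reflect w"
  by (metis reflect_reflect)

lemma bimonomial_reflect: "bimonomial e (reflect z) = (- 1) ^ fst e * bimonomial e z"
  by (simp add: bimonomial_def reflect_def power_minus[of "fst z"])

lemma P2_reflect:
  assumes "p \<in> P2 n"
  shows "p \<circ> reflect \<in> P2 n"
proof -
  obtain c where c: "\<And>z. p z = (\<Sum>e\<in>monomial_exponents n. c e * bimonomial e z)"
    using assms by (auto simp: P2_iff)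
  have "(p \<circ> reflect) z = (\<Sum>e\<in>monomial_exponents n. ((- 1) ^ fst e * c e) * bimonomial e z)" for z
    by (simp only: comp_apply c bimonomial_reflect mult_ac)
  then show ?thesis unfolding P2_iff by (intro exI[of _ "\<lambda>e. (- 1) ^ fst e * c e"]) simp
qed

section \<open>The Morrow-Patterson points\<close>

definition mp_node :: "nat \<Rightarrow> nat \<Rightarrow> nat \<Rightarrow> real \<times> real" where
  "mp_node n m k = (cos (real m * pi / real (n + 2)),
     if odd m then cos (2 * real k * pi / real (n + 3))
     else cos ((2 * real k - 1) * pi / real (n + 3)))"

lemma MP_eq_image: "MP n = (\<lambda>(m, k). mp_node n m k) ` ({1..n + 1} \<times> {1..n div 2 + 1})"
  unfolding MP_def mp_node_def image_def by (simp add: Bex_def) blast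

lemma finite_MP [simp]: "finite (MP n)"
  by (simp add: MP_eq_image)

lemma inj_on_mp_node: "inj_on (\<lambda>(m, k). mp_node n m k) ({1..n + 1} \<times> {1..n div 2 + 1})"
proof (rule inj_onI, clarify)
  fix m k m' k'
  assume mk: "m \<in> {1..n + 1}" "k \<in> {1..n div 2 + 1}" "m' \<in> {1..n + 1}" "k' \<in> {1..n div 2 + 1}"
    and eq: "mp_node n m k = mp_node n m' k'"
  have "m = m'"
    using eq mk cos_frac_pi_eq_iff[of "real m" "real (n + 2)" "real m'"]
    by (simp add: mp_node_def)
  moreover have "2 * real k \<le> real (n + 3)" "2 * real k' \<le> real (n + 3)"
    using mk by auto
  ultimately show "m = m' \<and> k = k'"
    using eq mk cos_frac_pi_eq_iff[of "2 * real k" "real (n + 3)" "2 * real k'"]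
      cos_frac_pi_eq_iff[of "2 * real k - 1" "real (n + 3)" "2 * real k' - 1"]
    by (auto simp: mp_node_def split: if_splits)
qed

lemma card_MP: "card (MP n) = (n + 1) * (n div 2 + 1)"
  unfolding MP_eq_image by (subst card_image[OF inj_on_mp_node]) simp

lemma card_MP_eq_card_monomial_exponents:
  "even n \<Longrightarrow> card (MP n) = card (monomial_exponents n)"
  using card_monomial_exponents[of n] by (auto simp: card_MP algebra_simps elim!: evenE)

lemma cos_pair_in_MP:
  assumes "even n" "1 \<le> m" "m \<le> n + 1" "1 \<le> j" "j \<le> n + 2" "odd (m + j)"
  shows "(cos (real m * pi / real (n + 2)), cos (real j * pi / real (n + 3))) \<in> MP n"
proof (cases "odd m")
  case True
  then obtain k where j: "j = 2 * k" using assms(6) by (auto elim!: evenE)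
  then have "mp_node n m k = (cos (real m * pi / real (n + 2)), cos (real j * pi / real (n + 3)))"
    using True by (simp add: mp_node_def)
  moreover have "k \<in> {1..n div 2 + 1}" using assms j by auto
  ultimately show ?thesis using assms unfolding MP_eq_image by force
next
  case False
  then obtain k where j: "j + 1 = 2 * k" using assms(6) by (metis add.commute even_add evenE odd_one)
  then have "real j = 2 * real k - 1" by linarith
  then have "mp_node n m k = (cos (real m * pi / real (n + 2)), cos (real j * pi / real (n + 3)))"
    using False by (simp add: mp_node_def)
  moreover have "j \<noteq> n + 2" using False assms by auto
  then have "k \<in> {1..n div 2 + 1}" using assms j by auto
  ultimately show ?thesis using assms unfolding MP_eq_image by force
qed

lemma reflect_MP:
  assumes "even n" "z \<in> MP n"
  shows "reflect z \<in> MP n"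
proof -
  obtain m k where mk: "m \<in> {1..n + 1}" "k \<in> {1..n div 2 + 1}" "z = mp_node n m k"
    using assms(2) unfolding MP_eq_image by auto
  have "real (n + 2 - m) * pi / real (n + 2) = pi - real m * pi / real (n + 2)"
    using mk(1) by (simp add: of_nat_diff field_simps)
  moreover have "odd (n + 2 - m) \<longleftrightarrow> odd m" using assms(1) mk(1) by auto
  ultimately have "reflect z = mp_node n (n + 2 - m) k"
    using mk(3) by (simp add: mp_node_def reflect_def)
  moreover have "n + 2 - m \<in> {1..n + 1}" using mk(1) by auto
  ultimately show ?thesis using mk(2) unfolding MP_eq_image by force
qed

lemma reflect_image_MP:
  assumes "even n"
  shows "reflect ` MP n = MP n"
proof
  show "reflect ` MP n \<subseteq> MP n" using reflect_MP[OF assms] by blast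
  show "MP n \<subseteq> reflect ` MP n"
  proof
    fix z assume "z \<in> MP n"
    then show "z \<in> reflect ` MP n"
      using reflect_MP[OF assms] by (metis image_eqI reflect_reflect)
  qed
qed

section \<open>Unisolvence\<close>

lemma consecutive_radix_eq_imp_eq:
  fixes a b i j i' j' :: nat
  assumes "b = a + 1" "i < a" "i' < a" "b * i + a * j = b * i' + a * j'"
  shows "i = i' \<and> j = j'"
proof -
  have "(a * (i + j) + i) mod a = (a * (i' + j') + i') mod a"
    using assms(1,4) by (simp add: algebra_simps)
  then have "i = i'" using assms(2,3) by simp
  then show ?thesis using assms by simp
qed

lemma card_nondivisible_ge:
  fixes a b :: nat
  assumes "0 < a" "0 < b"
  shows "(a - 1) * (b - 1) \<le> card {s \<in> {1..<a * b}. \<not> a dvd s \<and> \<not> b dvd s}"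
    (is "_ \<le> card ?S")
proof -
  have cover: "{1..<a * b} \<subseteq> ?S \<union> (\<lambda>k. a * k) ` {1..<b} \<union> (\<lambda>k. b * k) ` {1..<a}"
  proof
    fix s assume s: "s \<in> {1..<a * b}"
    have "s \<in> (\<lambda>k. a * k) ` {1..<b}" if "a dvd s"
      using that s by (auto elim!: dvdE)
    moreover have "s \<in> (\<lambda>k. b * k) ` {1..<a}" if "b dvd s"
      using that s by (auto elim!: dvdE simp: mult.commute[of b])
    ultimately show "s \<in> ?S \<union> (\<lambda>k. a * k) ` {1..<b} \<union> (\<lambda>k. b * k) ` {1..<a}"
      using s by auto
  qed
  have "a * b - 1 = card {1..<a * b}" by simp
  also have "\<dots> \<le> card (?S \<union> (\<lambda>k. a * k) ` {1..<b} \<union> (\<lambda>k. b * k) ` {1..<a})"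
    by (rule card_mono[OF _ cover]) auto
  also have "\<dots> \<le> card ?S + (b - 1) + (a - 1)"
    using card_Un_le[of "?S \<union> (\<lambda>k. a * k) ` {1..<b}" "(\<lambda>k. b * k) ` {1..<a}"]
      card_Un_le[of ?S "(\<lambda>k. a * k) ` {1..<b}"]
      card_image_le[of "{1..<b}" "\<lambda>k. a * k"] card_image_le[of "{1..<a}" "\<lambda>k. b * k"]
    by simp
  finally have "a * b - 1 \<le> card ?S + (b - 1) + (a - 1)" .
  moreover have "a * b - 1 = (a - 1) * (b - 1) + (b - 1) + (a - 1)"
    using assms by (cases a; cases b) simp_all
  ultimately show ?thesis by linarith
qed

lemma cos_angle_in_MP:
  assumes "even n" "\<not> (n + 2) dvd s" "\<not> (n + 3) dvd s"
  shows "(cos (real s * pi / real (n + 2)), - cos (real s * pi / real (n + 3))) \<in> MP n"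
proof -
  obtain m where m: "0 < m" "m < n + 2" "even m \<longleftrightarrow> even s"
      "cos (real s * pi / real (n + 2)) = cos (real m * pi / real (n + 2))"
    using cos_nat_mult_pi_div_reduce[of "n + 2" s] assms(2) by auto
  obtain m' where m': "0 < m'" "m' < n + 3" "even m' \<longleftrightarrow> even s"
      "cos (real s * pi / real (n + 3)) = cos (real m' * pi / real (n + 3))"
    using cos_nat_mult_pi_div_reduce[of "n + 3" s] assms(3) by auto
  have "real (n + 3 - m') * pi / real (n + 3) = pi - real m' * pi / real (n + 3)"
    using m'(2) by (simp add: of_nat_diff field_simps)
  then have "- cos (real s * pi / real (n + 3)) = cos (real (n + 3 - m') * pi / real (n + 3))"
    using m'(4) by simp
  moreover have "odd (m + (n + 3 - m'))"
    using assms(1) m(3) m'(2,3) by presburger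
  then have "(cos (real m * pi / real (n + 2)), cos (real (n + 3 - m') * pi / real (n + 3))) \<in> MP n"
    using m(1,2) m'(1,2) by (intro cos_pair_in_MP[OF assms(1)]) auto
  ultimately show ?thesis using m(4) by simp
qed

definition chebyshev_monomial :: "nat \<Rightarrow> nat \<times> nat \<Rightarrow> real poly" where
  "chebyshev_monomial n e = chebyshev (n + 3) ^ fst e * (- chebyshev (n + 2)) ^ snd e"

definition chebyshev_pullback :: "nat \<Rightarrow> (nat \<times> nat \<Rightarrow> real) \<Rightarrow> real poly" where
  "chebyshev_pullback n c = (\<Sum>e\<in>monomial_exponents n. smult (c e) (chebyshev_monomial n e))"

lemma poly_chebyshev_pullback_cos:
  "poly (chebyshev_pullback n c) (cos t) = (\<Sum>e\<in>monomial_exponents n.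
     c e * bimonomial e (cos (real (n + 3) * t), - cos (real (n + 2) * t)))"
  by (simp add: chebyshev_pullback_def chebyshev_monomial_def bimonomial_def poly_sum
      poly_chebyshev_cos)

lemma chebyshev_monomial_nonzero: "chebyshev_monomial n e \<noteq> 0"
  by (simp add: chebyshev_monomial_def)

lemma degree_chebyshev_monomial:
  "degree (chebyshev_monomial n e) = (n + 3) * fst e + (n + 2) * snd e"
  by (simp add: chebyshev_monomial_def degree_mult_eq degree_power_eq)

lemma inj_on_degree_chebyshev_monomial:
  "inj_on (\<lambda>e. degree (chebyshev_monomial n e)) (monomial_exponents n)"
proof (rule inj_onI)
  fix e e' assume "e \<in> monomial_exponents n" "e' \<in> monomial_exponents n"
    and "degree (chebyshev_monomial n e) = degree (chebyshev_monomial n e')"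
  then show "e = e'"
    using consecutive_radix_eq_imp_eq[where a = "n + 2" and b = "n + 3" and i = "fst e"
        and i' = "fst e'" and j = "snd e" and j' = "snd e'"]
    unfolding degree_chebyshev_monomial by (auto simp: monomial_exponents_def prod_eq_iff)
qed

lemma degree_chebyshev_pullback_le: "degree (chebyshev_pullback n c) \<le> (n + 3) * n"
  unfolding chebyshev_pullback_def
proof (rule degree_sum_le)
  fix e assume "e \<in> monomial_exponents n"
  then have "fst e + snd e \<le> n" by (auto simp: monomial_exponents_def)
  have "degree (smult (c e) (chebyshev_monomial n e)) \<le> degree (chebyshev_monomial n e)"
    by (rule degree_smult_le)
  also have "\<dots> \<le> (n + 3) * (fst e + snd e)"
    unfolding degree_chebyshev_monomial by (simp add: algebra_simps)
  also have "\<dots> \<le> (n + 3) * n"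
    using \<open>fst e + snd e \<le> n\<close> by simp
  finally show "degree (smult (c e) (chebyshev_monomial n e)) \<le> (n + 3) * n" .
qed simp

lemma chebyshev_pullback_eq_0D:
  "chebyshev_pullback n c = 0 \<Longrightarrow> e \<in> monomial_exponents n \<Longrightarrow> c e = 0"
  using lin_indep_distinct_degrees[OF finite_monomial_exponents chebyshev_monomial_nonzero
      inj_on_degree_chebyshev_monomial]
  unfolding chebyshev_pullback_def by blast

lemma MP_unisolvent:
  assumes "even n"
    and vanish: "\<forall>z\<in>MP n. (\<Sum>e\<in>monomial_exponents n. c e * bimonomial e z) = 0"
  shows "\<forall>e\<in>monomial_exponents n. c e = 0"
proof -
  define S where "S = {s \<in> {1..<(n + 2) * (n + 3)}. \<not> (n + 2) dvd s \<and> \<not> (n + 3) dvd s}"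
  define \<theta> where "\<theta> s = real s * pi / (real (n + 2) * real (n + 3))" for s
  have cancel: "b * (x / (a * b)) = x / a" "a * (x / (a * b)) = x / b"
    if "a \<noteq> 0" "b \<noteq> 0" for a b x :: real
    using that by (simp_all add: field_simps)
  have "poly (chebyshev_pullback n c) (cos (\<theta> s)) = 0" if "s \<in> S" for s
  proof -
    have "real (n + 3) * \<theta> s = real s * pi / real (n + 2)"
      "real (n + 2) * \<theta> s = real s * pi / real (n + 3)"
      unfolding \<theta>_def by (simp_all only: cancel of_nat_eq_0_iff)
    then show ?thesis
      using vanish cos_angle_in_MP[OF assms(1)] that
      by (simp only: poly_chebyshev_pullback_cos S_def) auto
  qed
  moreover have "inj_on (\<lambda>s. cos (\<theta> s)) S"
  proof (rule inj_onI)
    fix s s' assume "s \<in> S" "s' \<in> S" and "cos (\<theta> s) = cos (\<theta> s')"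
    moreover have "real s \<le> real (n + 2) * real (n + 3)" "real s' \<le> real (n + 2) * real (n + 3)"
      using \<open>s \<in> S\<close> \<open>s' \<in> S\<close> unfolding S_def of_nat_mult[symmetric] of_nat_le_iff by auto
    ultimately show "s = s'"
      using cos_frac_pi_eq_iff[of "real s" "real (n + 2) * real (n + 3)" "real s'"]
      unfolding \<theta>_def by simp
  qed
  moreover have "(n + 3) * n < card S"
    using card_nondivisible_ge[of "n + 2" "n + 3"] unfolding S_def by (simp add: algebra_simps)
  ultimately have "chebyshev_pullback n c = 0"
    using degree_chebyshev_pullback_le[of n c]
    by (intro poly_eqI_degree[of "(\<lambda>s. cos (\<theta> s)) ` S" _ 0]) (auto simp: card_image)
  then show ?thesis using chebyshev_pullback_eq_0D by blast
qed

section \<open>The Lagrange basis\<close>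

lemma P2_eq_if_eq_on_MP:
  assumes "even n" "p \<in> P2 n" "q \<in> P2 n" "\<forall>z\<in>MP n. p z = q z"
  shows "p = q"
proof -
  obtain c d where
    c: "\<forall>z. p z = (\<Sum>e\<in>monomial_exponents n. c e * bimonomial e z)" and
    d: "\<forall>z. q z = (\<Sum>e\<in>monomial_exponents n. d e * bimonomial e z)"
    using assms(2,3) unfolding P2_iff by blast
  have "\<forall>z\<in>MP n. (\<Sum>e\<in>monomial_exponents n. (c e - d e) * bimonomial e z) = 0"
    using assms(4) c d by (simp add: left_diff_distrib sum_subtractf)
  then have "\<forall>e\<in>monomial_exponents n. c e = d e"
    using MP_unisolvent[OF assms(1), of "\<lambda>e. c e - d e"] by simp
  then show ?thesis using c d by (auto intro!: ext sum.cong)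
qed

lemma P2_interpolant_exists:
  assumes "even n"
  obtains p where "p \<in> P2 n" "\<forall>z\<in>MP n. p z = g z"
proof -
  obtain c where "\<forall>z\<in>MP n. (\<Sum>e\<in>monomial_exponents n. c e * bimonomial e z) = g z"
    using square_linear_system_solvable[where E = "monomial_exponents n" and X = "MP n"
        and \<phi> = bimonomial and g = g]
      MP_unisolvent[OF assms] card_MP_eq_card_monomial_exponents[OF assms] by auto
  then show thesis
    using that[of "\<lambda>z. \<Sum>e\<in>monomial_exponents n. c e * bimonomial e z"] by (auto simp: P2_iff)
qed

lemma lagrange_basis_eqI:
  assumes "even n" "p \<in> P2 n" "\<forall>b\<in>MP n. p b = (if b = a then 1 else 0)"
  shows "lagrange_basis n a = p"
  unfolding lagrange_basis_def
proof (rule the_equality)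
  show "p \<in> P2 n \<and> (\<forall>b\<in>MP n. p b = (if b = a then 1 else 0))"
    using assms(2,3) ..
  show "q = p" if "q \<in> P2 n \<and> (\<forall>b\<in>MP n. q b = (if b = a then 1 else 0))" for q
    using P2_eq_if_eq_on_MP[OF assms(1), of q p] that assms(2,3) by auto
qed

lemma lagrange_basis_reflect:
  assumes "even n"
  shows "lagrange_basis n (reflect a) = lagrange_basis n a \<circ> reflect"
proof -
  obtain p where p: "p \<in> P2 n" "\<forall>b\<in>MP n. p b = (if b = a then 1 else 0)"
    using P2_interpolant_exists[OF assms, where g = "\<lambda>b. if b = a then 1 else 0"] by blast
  have "\<forall>b\<in>MP n. (p \<circ> reflect) b = (if b = reflect a then 1 else 0)"
    using p(2) reflect_MP[OF assms] by (simp add: reflect_eq_iff)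
  then have "lagrange_basis n (reflect a) = p \<circ> reflect"
    by (rule lagrange_basis_eqI[OF assms P2_reflect[OF p(1)]])
  moreover have "lagrange_basis n a = p"
    by (rule lagrange_basis_eqI[OF assms p])
  ultimately show ?thesis by simp
qed

theorem lemma5:
  fixes n :: nat and x y :: real
  assumes "n > 0" and "even n"
    and "x \<in> {-1..1}" and "y \<in> {-1..1}"
  shows "lebesgue_fun n x y = lebesgue_fun n (-x) y"
proof -
  have "lebesgue_fun n (- x) y = (\<Sum>a\<in>MP n. \<bar>lagrange_basis n (reflect a) (x, y)\<bar>)"
    by (simp add: lebesgue_fun_def lagrange_basis_reflect[OF assms(2)])
  also have "\<dots> = (\<Sum>a\<in>reflect ` MP n. \<bar>lagrange_basis n a (x, y)\<bar>)"
    by (simp add: sum.reindex inj_on_reflect)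
  also have "\<dots> = lebesgue_fun n x y"
    by (simp add: reflect_image_MP[OF assms(2)] lebesgue_fun_def)
  finally show ?thesis by (rule sym)
qed

end
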